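(* Let $\delta\in[0,1)$, $c_\delta(x)=(x^2/(1+x^2))^\delta$, let $X=c_\delta^{1/2}\,\frac{d}{dx}$ be the operator on $L_2({\bf R})$ with domain $D(X)=C_c^\infty({\bf R})$, and let $X_0$ be its restriction to $D(X_0)=C_c^\infty({\bf R}\setminus\{0\})$. If $\delta\in[0,1/2)$ then the closure $\overline{X_0}$ is a proper restriction of the closure $\overline X$ ($\overline{X_0}\subsetneq\overline X$), whereas if $\delta\in[1/2,1)$ then $\overline{X_0}=\overline X$. *)

theory Defs
  imports "HOL-Analysis.Analysis"
begin

definition dx :: "(real \<Rightarrow> complex) \<Rightarrow> (real \<Rightarrow> complex)" where
  "dx f = (\<lambda>x. vector_derivative f (at x))"

definition smooth :: "(real \<Rightarrow> complex) \<Rightarrow> bool" where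
  "smooth f \<longleftrightarrow> (\<forall>k x. (dx ^^ k) f differentiable (at x))"

definition tsupp :: "(real \<Rightarrow> complex) \<Rightarrow> real set" where
  "tsupp f = closure {x. f x \<noteq> 0}"

definition Cc_inf :: "real set \<Rightarrow> (real \<Rightarrow> complex) set" where
  "Cc_inf U = {f. smooth f \<and> compact (tsupp f) \<and> tsupp f \<subseteq> U}"

definition L2 :: "(real \<Rightarrow> complex) \<Rightarrow> bool" where
  "L2 f \<longleftrightarrow> f \<in> borel_measurable lborel \<and> integrable lborel (\<lambda>x. (norm (f x))\<^sup>2)"

definition L2dist2 :: "(real \<Rightarrow> complex) \<Rightarrow> (real \<Rightarrow> complex) \<Rightarrow> real" where
  "L2dist2 f g = (LINT x|lborel. (norm (f x - g x))\<^sup>2)"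

text \<open>Graph of the closure of the operator T with domain D in L2(R):
  pairs (f,g) of L2 functions that are L2-limits of (\<phi>_n, T \<phi>_n) with \<phi>_n \<in> D.\<close>
definition closure_graph ::
  "(real \<Rightarrow> complex) set \<Rightarrow> ((real \<Rightarrow> complex) \<Rightarrow> (real \<Rightarrow> complex))
     \<Rightarrow> ((real \<Rightarrow> complex) \<times> (real \<Rightarrow> complex)) set" where
  "closure_graph D T = {(f, g). L2 f \<and> L2 g \<and>
     (\<exists>\<phi>. (\<forall>n. \<phi> n \<in> D) \<and> (\<lambda>n. L2dist2 (\<phi> n) f) \<longlonglongrightarrow> 0
          \<and> (\<lambda>n. L2dist2 (T (\<phi> n)) g) \<longlonglongrightarrow> 0)}"

text \<open>c_\<delta>(x) = (x^2/(1+x^2))^\<delta>, with the convention 0^0 = 1 (Isabelle's powr has 0 powr 0 = 0).\<close>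
definition c_delta :: "real \<Rightarrow> real \<Rightarrow> real" where
  "c_delta \<delta> x = (if \<delta> = 0 then 1 else (x\<^sup>2 / (1 + x\<^sup>2)) powr \<delta>)"

definition Xop :: "real \<Rightarrow> (real \<Rightarrow> complex) \<Rightarrow> (real \<Rightarrow> complex)" where
  "Xop \<delta> f = (\<lambda>x. complex_of_real (sqrt (c_delta \<delta> x)) * dx f x)"

end

theory Submission
  imports Defs "HOL-Computational_Algebra.Polynomial"
begin

text \<open>
  For \<open>\<delta> < 1/2\<close> the weight \<open>1/c\<^sub>\<delta>\<close> is integrable near \<open>0\<close>.  Let \<open>\<chi>\<close> be a plateau function with
  \<open>\<chi>(0) = 1\<close> and let \<open>\<psi> \<in> C\<^sub>c\<^sup>\<infinity>(\<real>\<setminus>{0})\<close>.  Then \<open>u = \<chi> - \<psi>\<close> satisfies \<open>u(0) = 1\<close>, and if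
  \<open>\<parallel>u\<parallel>\<^sub>2\<close> is small then \<open>|u(t)| \<le> 1/4\<close> for some \<open>t \<in> [0,1]\<close>, so that
  \<open>3/4 \<le> \<integral>\<^sub>0\<^sup>1 |u'| \<le> (\<integral>\<^sub>0\<^sup>1 1/c\<^sub>\<delta>)\<^sup>1\<^sup>/\<^sup>2 \<parallel>X u\<parallel>\<^sub>2\<close>.  Hence \<open>(\<chi>, X\<chi>)\<close> is not in the graph
  of \<open>closure X\<^sub>0\<close>.

  For \<open>\<delta> \<ge> 1/2\<close> one has \<open>c\<^sub>\<delta>(x) \<le> |x|\<close> near \<open>0\<close>, and every \<open>\<phi> \<in> C\<^sub>c\<^sup>\<infinity>(\<real>)\<close> is approximated in
  graph norm by \<open>(1 - \<chi>\<^sub>N) \<phi>\<close>, where \<open>\<chi>\<^sub>N(x) = N\<^sup>-\<^sup>1 \<Sum>\<^sub>N\<^sub>\<le>\<^sub>j\<^sub><\<^sub>2\<^sub>N \<chi>(2\<^sup>j x)\<close> is a logarithmic cutoff: the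
  terms \<open>2\<^sup>j \<chi>'(2\<^sup>j x)\<close> have disjoint supports, so \<open>\<integral> |x| |\<chi>\<^sub>N'(x)|\<^sup>2 dx = O(1/N)\<close>.
\<close>

definition smooth_upto :: "nat \<Rightarrow> (real \<Rightarrow> complex) \<Rightarrow> bool" where
  "smooth_upto k f \<longleftrightarrow> (\<forall>j\<le>k. \<forall>x. (dx ^^ j) f differentiable (at x))"

lemma smooth_upto_0: "smooth_upto 0 f \<longleftrightarrow> (\<forall>x. f differentiable (at x))"
  by (simp add: smooth_upto_def)

lemma smooth_upto_Suc:
  "smooth_upto (Suc k) f \<longleftrightarrow> (\<forall>x. f differentiable (at x)) \<and> smooth_upto k (dx f)"
proof
  assume A: "smooth_upto (Suc k) f"
  show "(\<forall>x. f differentiable (at x)) \<and> smooth_upto k (dx f)"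
  proof
    show "\<forall>x. f differentiable (at x)" using A unfolding smooth_upto_def by (metis funpow_0 le0)
    show "smooth_upto k (dx f)" unfolding smooth_upto_def
    proof (intro allI impI)
      fix j x assume "j \<le> k"
      then have "(dx ^^ Suc j) f differentiable (at x)" using A unfolding smooth_upto_def by auto
      then show "(dx ^^ j) (dx f) differentiable (at x)"
        by (simp add: funpow_Suc_right del: funpow.simps)
    qed
  qed
next
  assume A: "(\<forall>x. f differentiable (at x)) \<and> smooth_upto k (dx f)"
  show "smooth_upto (Suc k) f" unfolding smooth_upto_def
  proof (intro allI impI)
    fix j x assume j: "j \<le> Suc k"
    show "(dx ^^ j) f differentiable (at x)"
    proof (cases j)
      case 0 then show ?thesis using A by simp
    next
      case (Suc i)
      then have "(dx ^^ i) (dx f) differentiable (at x)" using A j unfolding smooth_upto_def by auto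
      then show ?thesis using Suc by (simp add: funpow_Suc_right del: funpow.simps)
    qed
  qed
qed

lemma smooth_upto_Suc_imp: "smooth_upto (Suc k) f \<Longrightarrow> smooth_upto k f"
  by (simp add: smooth_upto_def)

lemma smooth_upto_imp_differentiable: "smooth_upto k f \<Longrightarrow> f differentiable (at x)"
  unfolding smooth_upto_def by (metis funpow_0 le0)

lemma smooth_iff_smooth_upto: "smooth f \<longleftrightarrow> (\<forall>k. smooth_upto k f)"
  unfolding smooth_def smooth_upto_def by auto

lemma dx_eqI: "(f has_vector_derivative D) (at x) \<Longrightarrow> dx f x = D"
  unfolding dx_def by (rule vector_derivative_at)

lemma has_vector_derivative_dx: "f differentiable (at x) \<Longrightarrow> (f has_vector_derivative dx f x) (at x)"
  unfolding dx_def using vector_derivative_works by blast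

lemma smooth_upto_Suc_continuous:
  "smooth_upto (Suc k) f \<Longrightarrow> continuous_on UNIV f \<and> continuous_on UNIV (dx f)"
  unfolding smooth_upto_Suc
  by (metis continuous_at_imp_continuous_on differentiable_imp_continuous_within
      smooth_upto_imp_differentiable)

lemma smooth_upto_const: "smooth_upto k (\<lambda>x. c)"
proof (induction k arbitrary: c)
  case 0 then show ?case by (simp add: smooth_upto_0)
next
  case (Suc k)
  have "dx (\<lambda>x. c) = (\<lambda>x. 0)" by (rule ext, rule dx_eqI) (rule derivative_intros)
  then show ?case using Suc by (simp add: smooth_upto_Suc)
qed

lemma smooth_upto_of_real_ident: "smooth_upto k (\<lambda>x. complex_of_real x)"
proof (induction k)
  case 0 then show ?case unfolding smooth_upto_0
    using differentiableI_vector has_vector_derivative_of_real[OF DERIV_ident] by blast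
next
  case (Suc k)
  have "dx (\<lambda>x. complex_of_real x) = (\<lambda>x. 1)"
    by (rule ext, rule dx_eqI) (use has_vector_derivative_of_real[OF DERIV_ident] in simp)
  then show ?case using Suc smooth_upto_const by (simp add: smooth_upto_Suc)
qed

lemma dx_add:
  "(\<forall>x. f differentiable (at x)) \<Longrightarrow> (\<forall>x. g differentiable (at x)) \<Longrightarrow>
   dx (\<lambda>x. f x + g x) = (\<lambda>x. dx f x + dx g x)"
  by (rule ext, rule dx_eqI, intro has_vector_derivative_add has_vector_derivative_dx) auto

lemma dx_mult:
  "(\<forall>x. f differentiable (at x)) \<Longrightarrow> (\<forall>x. g differentiable (at x)) \<Longrightarrow>
   dx (\<lambda>x. f x * g x) = (\<lambda>x. dx f x * g x + f x * dx g x)"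
  by (rule ext, rule dx_eqI, subst add.commute, intro has_vector_derivative_mult has_vector_derivative_dx) auto

lemma smooth_upto_add: "smooth_upto k f \<Longrightarrow> smooth_upto k g \<Longrightarrow> smooth_upto k (\<lambda>x. f x + g x)"
proof (induction k arbitrary: f g)
  case 0 then show ?case by (auto simp: smooth_upto_0)
next
  case (Suc k) then show ?case by (auto simp: smooth_upto_Suc dx_add)
qed

lemma smooth_upto_mult: "smooth_upto k f \<Longrightarrow> smooth_upto k g \<Longrightarrow> smooth_upto k (\<lambda>x. f x * g x)"
proof (induction k arbitrary: f g)
  case 0 then show ?case by (auto simp: smooth_upto_0)
next
  case (Suc k)
  have "smooth_upto k (\<lambda>x. dx f x * g x + f x * dx g x)"
    using Suc by (intro smooth_upto_add Suc.IH) (auto simp: smooth_upto_Suc intro: smooth_upto_Suc_imp)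
  then show ?case using Suc.prems by (auto simp: smooth_upto_Suc dx_mult)
qed

lemma has_vector_derivative_inverse_dx:
  assumes "f differentiable (at x)" "f x \<noteq> 0"
  shows "((\<lambda>x. inverse (f x)) has_vector_derivative - (inverse (f x) * dx f x * inverse (f x))) (at x)"
proof -
  have "((inverse \<circ> f) has_vector_derivative (dx f x * - (inverse (f x) ^ Suc (Suc 0)))) (at x)"
    by (rule field_vector_diff_chain_at[OF has_vector_derivative_dx[OF assms(1)] DERIV_inverse[OF assms(2)]])
  then show ?thesis by (simp add: o_def algebra_simps)
qed

lemma smooth_upto_inverse:
  "smooth_upto k f \<Longrightarrow> (\<forall>x. f x \<noteq> 0) \<Longrightarrow> smooth_upto k (\<lambda>x. inverse (f x))"
proof (induction k arbitrary: f)
  case 0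
  then show ?case unfolding smooth_upto_0
    using has_vector_derivative_inverse_dx differentiableI_vector by blast
next
  case (Suc k)
  have d: "((\<lambda>x. inverse (f x)) has_vector_derivative - (inverse (f x) * dx f x * inverse (f x))) (at x)" for x
    using Suc.prems by (intro has_vector_derivative_inverse_dx) (auto simp: smooth_upto_Suc)
  then have "dx (\<lambda>x. inverse (f x)) = (\<lambda>x. (-1) * (inverse (f x) * dx f x * inverse (f x)))"
    by (auto intro: dx_eqI)
  moreover have "smooth_upto k (\<lambda>x. (-1) * (inverse (f x) * dx f x * inverse (f x)))"
    using Suc by (intro smooth_upto_mult smooth_upto_const Suc.IH)
      (auto simp: smooth_upto_Suc intro: smooth_upto_Suc_imp)
  ultimately show ?case using d differentiableI_vector by (auto simp: smooth_upto_Suc)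
qed

definition real_smooth :: "(real \<Rightarrow> real) \<Rightarrow> bool" where
  "real_smooth u \<longleftrightarrow> smooth (\<lambda>x. complex_of_real (u x))"

lemma real_smooth_iff: "real_smooth u \<longleftrightarrow> (\<forall>k. smooth_upto k (\<lambda>x. complex_of_real (u x)))"
  by (simp add: real_smooth_def smooth_iff_smooth_upto)

lemma has_real_derivative_Re_dx:
  assumes "(\<lambda>x. complex_of_real (u x)) differentiable (at x)"
  shows "(u has_real_derivative Re (dx (\<lambda>x. complex_of_real (u x)) x)) (at x)"
    and "dx (\<lambda>x. complex_of_real (u x)) x = of_real (Re (dx (\<lambda>x. complex_of_real (u x)) x))"
proof -
  define D where "D = dx (\<lambda>x. complex_of_real (u x)) x"
  have "((\<lambda>x. complex_of_real (u x)) has_vector_derivative D) (at x)"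
    using has_vector_derivative_dx[OF assms] D_def by simp
  then have "((\<lambda>x. Re (complex_of_real (u x))) has_vector_derivative Re D) (at x)"
    by (rule bounded_linear.has_vector_derivative[OF bounded_linear_Re])
  then have u: "(u has_real_derivative Re D) (at x)"
    by (simp add: has_real_derivative_iff_has_vector_derivative)
  then show "(u has_real_derivative Re (dx (\<lambda>x. complex_of_real (u x)) x)) (at x)"
    using D_def by simp
  show "dx (\<lambda>x. complex_of_real (u x)) x = of_real (Re (dx (\<lambda>x. complex_of_real (u x)) x))"
    using dx_eqI[OF has_vector_derivative_of_real[OF u]] D_def by simp
qed

lemma has_vector_derivative_compose_real:
  assumes "(\<lambda>x. complex_of_real (u x)) differentiable (at x)" "f differentiable (at (u x))"
  shows "((\<lambda>x. f (u x)) has_vector_derivative dx (\<lambda>x. complex_of_real (u x)) x * dx f (u x)) (at x)"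
proof -
  note u' = has_real_derivative_Re_dx[OF assms(1)]
  have "((f \<circ> u) has_vector_derivative Re (dx (\<lambda>x. complex_of_real (u x)) x) *\<^sub>R dx f (u x)) (at x)"
    by (rule vector_diff_chain_at)
      (use u'(1) has_vector_derivative_dx[OF assms(2)] in
        \<open>auto simp: has_real_derivative_iff_has_vector_derivative\<close>)
  then show ?thesis using u'(2) by (simp add: o_def scaleR_conv_of_real)
qed

lemma smooth_upto_compose: "real_smooth u \<Longrightarrow> smooth_upto k f \<Longrightarrow> smooth_upto k (\<lambda>x. f (u x))"
proof (induction k arbitrary: f)
  case 0
  then show ?case unfolding smooth_upto_0 real_smooth_iff
    using has_vector_derivative_compose_real differentiableI_vector smooth_upto_imp_differentiable
    by metis
next
  case (Suc k)
  have U: "\<And>x. (\<lambda>x. complex_of_real (u x)) differentiable (at x)"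
    using Suc.prems(1) smooth_upto_imp_differentiable unfolding real_smooth_iff by blast
  have F: "\<forall>x. f differentiable (at x)" using Suc.prems(2) by (simp add: smooth_upto_Suc)
  have d: "((\<lambda>x. f (u x)) has_vector_derivative dx (\<lambda>x. complex_of_real (u x)) x * dx f (u x)) (at x)" for x
    using U F by (intro has_vector_derivative_compose_real) auto
  then have "dx (\<lambda>x. f (u x)) = (\<lambda>x. dx (\<lambda>x. complex_of_real (u x)) x * dx f (u x))"
    by (auto intro: dx_eqI)
  moreover have "smooth_upto k (dx (\<lambda>x. complex_of_real (u x)))"
    using Suc.prems(1) smooth_upto_Suc unfolding real_smooth_iff by blast
  then have "smooth_upto k (\<lambda>x. dx (\<lambda>x. complex_of_real (u x)) x * dx f (u x))"
    using Suc.prems by (intro smooth_upto_mult Suc.IH) (auto simp: smooth_upto_Suc)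
  ultimately show ?case using d differentiableI_vector by (auto simp: smooth_upto_Suc)
qed

lemma real_smooth_const: "real_smooth (\<lambda>x. a)"
  unfolding real_smooth_iff using smooth_upto_const by auto

lemma real_smooth_ident: "real_smooth (\<lambda>x. x)"
  unfolding real_smooth_iff using smooth_upto_of_real_ident by auto

lemma real_smooth_add: "real_smooth u \<Longrightarrow> real_smooth v \<Longrightarrow> real_smooth (\<lambda>x. u x + v x)"
  unfolding real_smooth_iff using smooth_upto_add by simp

lemma real_smooth_mult: "real_smooth u \<Longrightarrow> real_smooth v \<Longrightarrow> real_smooth (\<lambda>x. u x * v x)"
  unfolding real_smooth_iff using smooth_upto_mult by simp

lemma real_smooth_diff: "real_smooth u \<Longrightarrow> real_smooth v \<Longrightarrow> real_smooth (\<lambda>x. u x - v x)"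
  using real_smooth_add[of u "\<lambda>x. (-1) * v x"] real_smooth_mult real_smooth_const by fastforce

lemma real_smooth_inverse: "real_smooth u \<Longrightarrow> (\<forall>x. u x \<noteq> 0) \<Longrightarrow> real_smooth (\<lambda>x. inverse (u x))"
  unfolding real_smooth_iff using smooth_upto_inverse by (simp add: of_real_inverse)

lemma real_smooth_compose: "real_smooth u \<Longrightarrow> real_smooth v \<Longrightarrow> real_smooth (\<lambda>x. v (u x))"
  using smooth_upto_compose[of u _ "\<lambda>x. complex_of_real (v x)"] by (simp add: real_smooth_iff)

lemma real_smooth_sum:
  "finite J \<Longrightarrow> (\<And>j. j \<in> J \<Longrightarrow> real_smooth (f j)) \<Longrightarrow> real_smooth (\<lambda>x. \<Sum>j\<in>J. f j x)"
  by (induction J rule: finite_induct) (simp_all add: real_smooth_const real_smooth_add)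

lemma real_smooth_has_real_derivative:
  "real_smooth u \<Longrightarrow> (u has_real_derivative Re (dx (\<lambda>x. complex_of_real (u x)) x)) (at x)"
  unfolding real_smooth_iff by (intro has_real_derivative_Re_dx(1) smooth_upto_imp_differentiable) blast

section \<open>A smooth plateau function\<close>

lemma tendsto_poly_times_exp_neg_at_top: "((\<lambda>t. poly (p::real poly) t * exp (- t)) \<longlongrightarrow> 0) at_top"
proof -
  have "((\<lambda>t. \<Sum>i\<le>degree p. coeff p i * (t ^ i / exp t)) \<longlongrightarrow> (\<Sum>i\<le>degree p. coeff p i * 0)) at_top"
    by (intro tendsto_sum tendsto_mult tendsto_const tendsto_power_div_exp_0)
  moreover have "(\<Sum>i\<le>degree p. coeff p i * (t ^ i / exp t)) = poly p t * exp (- t)" for t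
    by (simp add: poly_altdef exp_minus divide_inverse sum_distrib_right mult.assoc)
  ultimately show ?thesis by simp
qed

lemma tendsto_poly_inverse_times_exp_at_right_0:
  "((\<lambda>y. poly (p::real poly) (1/y) * exp (- (1/y))) \<longlongrightarrow> 0) (at_right 0)"
proof -
  have "filterlim (\<lambda>y::real. 1/y) at_top (at_right 0)"
    using filterlim_inverse_at_top_right by (simp add: inverse_eq_divide)
  from filterlim_compose[OF tendsto_poly_times_exp_neg_at_top this] show ?thesis by simp
qed

text \<open>The functions \<open>x \<mapsto> q(1/x) e\<^sup>-\<^sup>1\<^sup>/\<^sup>x\<close> (\<open>x > 0\<close>), extended by \<open>0\<close>, are closed under
  differentiation; this gives smoothness of \<open>e\<^sup>-\<^sup>1\<^sup>/\<^sup>x\<close> at \<open>0\<close>.\<close>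

definition poly_exp_inv :: "real poly \<Rightarrow> real \<Rightarrow> real" where
  "poly_exp_inv q x = (if 0 < x then poly q (1/x) * exp (- (1/x)) else 0)"

definition poly_exp_inv_deriv :: "real poly \<Rightarrow> real poly" where
  "poly_exp_inv_deriv q = [:0,0,1:] * (q - pderiv q)"

lemma poly_exp_inv_has_real_derivative_0: "(poly_exp_inv q has_real_derivative 0) (at 0)"
proof -
  have "((\<lambda>y. (poly_exp_inv q y - poly_exp_inv q 0) / (y - 0)) \<longlongrightarrow> 0) (at_left 0)"
    by (rule Lim_transform_eventually[OF tendsto_const])
      (auto simp: eventually_at_left_field poly_exp_inv_def intro: exI[of _ "-1"])
  moreover have "((\<lambda>y. (poly_exp_inv q y - poly_exp_inv q 0) / (y - 0)) \<longlongrightarrow> 0) (at_right 0)"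
    by (rule Lim_transform_eventually[OF tendsto_poly_inverse_times_exp_at_right_0[of "[:0,1:] * q"]])
      (auto simp: eventually_at_right_field poly_exp_inv_def intro!: exI[of _ "1"])
  ultimately show ?thesis
    by (simp add: has_field_derivative_iff filterlim_at_split)
qed

lemma poly_exp_inv_has_real_derivative:
  "(poly_exp_inv q has_real_derivative poly_exp_inv (poly_exp_inv_deriv q) x) (at x)"
proof -
  consider "0 < x" | "x < 0" | "x = 0" by linarith
  then show ?thesis
  proof cases
    case 1
    have ev: "eventually (\<lambda>y. poly_exp_inv q y = poly q (1/y) * exp (- (1/y))) (nhds x)"
      using eventually_nhds_in_open[of "{0<..}" x] 1
      by (auto elim!: eventually_mono simp: poly_exp_inv_def)
    have d1: "((\<lambda>y. 1/y) has_real_derivative (- 1 / x^2)) (at x)"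
      using 1 by (auto intro!: derivative_eq_intros simp: power2_eq_square field_simps)
    have d1': "((\<lambda>y. - (1/y)) has_real_derivative (1 / x^2)) (at x)"
      using 1 by (auto intro!: derivative_eq_intros simp: power2_eq_square field_simps)
    have "((\<lambda>y. poly q (1/y) * exp (- (1/y))) has_real_derivative
          (poly (pderiv q) (1/x) * (- 1 / x^2)) * exp (- (1/x)) + poly q (1/x) * (exp (- (1/x)) * (1/x^2))) (at x)"
      using DERIV_mult[OF DERIV_chain2[OF poly_DERIV d1] DERIV_chain2[OF DERIV_exp d1']]
      by (simp add: algebra_simps)
    moreover have "(poly (pderiv q) (1/x) * (- 1 / x^2)) * exp (- (1/x)) + poly q (1/x) * (exp (- (1/x)) * (1/x^2))
         = poly_exp_inv (poly_exp_inv_deriv q) x"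
      using 1 by (simp add: poly_exp_inv_def poly_exp_inv_deriv_def algebra_simps power2_eq_square divide_simps)
    ultimately show ?thesis
      using DERIV_cong_ev[OF refl ev refl] by simp
  next
    case 2
    have ev: "eventually (\<lambda>y. poly_exp_inv q y = 0) (nhds x)"
      using eventually_nhds_in_open[of "{..<0}" x] 2
      by (auto elim!: eventually_mono simp: poly_exp_inv_def)
    have "(poly_exp_inv q has_real_derivative 0) (at x)"
      using DERIV_cong_ev[OF refl ev refl, of 0] DERIV_const by simp
    then show ?thesis using 2 by (simp add: poly_exp_inv_def)
  next
    case 3
    then show ?thesis using poly_exp_inv_has_real_derivative_0 by (simp add: poly_exp_inv_def)
  qed
qed

lemma real_smooth_poly_exp_inv: "real_smooth (poly_exp_inv q)"
proof -
  have "smooth_upto k (\<lambda>x. complex_of_real (poly_exp_inv q x))" for k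
  proof (induction k arbitrary: q)
    case 0 then show ?case unfolding smooth_upto_0
      using differentiableI_vector has_vector_derivative_of_real[OF poly_exp_inv_has_real_derivative] by blast
  next
    case (Suc k)
    have d: "((\<lambda>x. complex_of_real (poly_exp_inv q x)) has_vector_derivative
        complex_of_real (poly_exp_inv (poly_exp_inv_deriv q) x)) (at x)" for x
      by (rule has_vector_derivative_of_real[OF poly_exp_inv_has_real_derivative])
    then have "dx (\<lambda>x. complex_of_real (poly_exp_inv q x)) =
        (\<lambda>x. complex_of_real (poly_exp_inv (poly_exp_inv_deriv q) x))"
      by (auto intro: dx_eqI)
    moreover have "\<forall>x. (\<lambda>x. complex_of_real (poly_exp_inv q x)) differentiable (at x)"
      using d differentiableI_vector by blast
    ultimately show ?case using Suc by (auto simp: smooth_upto_Suc)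
  qed
  then show ?thesis by (simp add: real_smooth_iff)
qed

definition flat_exp :: "real \<Rightarrow> real" where
  "flat_exp x = (if 0 < x then exp (- (1/x)) else 0)"

lemma real_smooth_flat_exp: "real_smooth flat_exp"
proof -
  have "flat_exp = poly_exp_inv 1" by (rule ext) (simp add: flat_exp_def poly_exp_inv_def)
  then show ?thesis using real_smooth_poly_exp_inv[of 1] by metis
qed

lemma flat_exp_nonneg: "0 \<le> flat_exp t" by (simp add: flat_exp_def)
lemma flat_exp_pos: "0 < t \<Longrightarrow> 0 < flat_exp t" by (simp add: flat_exp_def)
lemma flat_exp_eq_0: "t \<le> 0 \<Longrightarrow> flat_exp t = 0" by (simp add: flat_exp_def)

definition plateau :: "real \<Rightarrow> real" where
  "plateau x = flat_exp (1 - x*x) / (flat_exp (1 - x*x) + flat_exp (x*x - 9/25))"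

lemma plateau_denom_pos: "0 < flat_exp (1 - x*x) + flat_exp (x*x - 9/25)"
proof (cases "x*x < 1")
  case True then show ?thesis using flat_exp_pos[of "1 - x*x"] flat_exp_nonneg[of "x*x - 9/25"] by simp
next
  case False then show ?thesis using flat_exp_pos[of "x*x - 9/25"] flat_exp_nonneg[of "1 - x*x"] by simp
qed

lemma plateau_eq_1: "\<bar>x\<bar> \<le> 3/5 \<Longrightarrow> plateau x = 1"
proof -
  assume "\<bar>x\<bar> \<le> 3/5"
  then have "\<bar>x\<bar> * \<bar>x\<bar> \<le> 3/5 * (3/5)" by (intro mult_mono) auto
  then have "x*x \<le> 9/25" by (simp add: abs_mult_self_eq)
  then show ?thesis using flat_exp_pos[of "1 - x*x"] by (simp add: plateau_def flat_exp_eq_0)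
qed

lemma plateau_eq_0: "1 \<le> \<bar>x\<bar> \<Longrightarrow> plateau x = 0"
proof -
  assume "1 \<le> \<bar>x\<bar>"
  then have "1 * 1 \<le> \<bar>x\<bar> * \<bar>x\<bar>" by (intro mult_mono) auto
  then have "1 \<le> x*x" by (simp add: abs_mult_self_eq)
  then show ?thesis by (simp add: plateau_def flat_exp_eq_0)
qed

lemma plateau_nonneg: "0 \<le> plateau x"
  using plateau_denom_pos[of x] flat_exp_nonneg[of "1 - x*x"] by (simp add: plateau_def)

lemma plateau_le_1: "plateau x \<le> 1"
  using plateau_denom_pos[of x] flat_exp_nonneg[of "x*x - 9/25"] by (simp add: plateau_def field_simps)

lemma real_smooth_plateau: "real_smooth plateau"
proof -
  have u: "real_smooth (\<lambda>x. 1 - x*x)" "real_smooth (\<lambda>x. x*x - 9/25)"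
    by (intro real_smooth_diff real_smooth_mult real_smooth_ident real_smooth_const)+
  have h: "real_smooth (\<lambda>x. flat_exp (1 - x*x))" "real_smooth (\<lambda>x. flat_exp (x*x - 9/25))"
    using real_smooth_compose[OF u(1) real_smooth_flat_exp] real_smooth_compose[OF u(2) real_smooth_flat_exp]
    by auto
  have "real_smooth (\<lambda>x. inverse (flat_exp (1 - x*x) + flat_exp (x*x - 9/25)))"
    using plateau_denom_pos
    by (intro real_smooth_inverse real_smooth_add h) (auto simp: less_imp_neq[symmetric])
  from real_smooth_mult[OF h(1) this] show ?thesis
    unfolding plateau_def[abs_def] divide_inverse .
qed

definition plateau_deriv :: "real \<Rightarrow> real" where
  "plateau_deriv x = Re (dx (\<lambda>x. complex_of_real (plateau x)) x)"

lemma plateau_has_real_derivative: "(plateau has_real_derivative plateau_deriv x) (at x)"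
  unfolding plateau_deriv_def by (rule real_smooth_has_real_derivative[OF real_smooth_plateau])

lemma plateau_deriv_eq_0:
  assumes "\<bar>y\<bar> < 3/5 \<or> 1 < \<bar>y\<bar>" shows "plateau_deriv y = 0"
proof -
  obtain c where ev: "eventually (\<lambda>x. plateau x = c) (nhds y)"
  proof (cases "\<bar>y\<bar> < 3/5")
    case True
    have "eventually (\<lambda>x. x \<in> {x. \<bar>x\<bar> < 3/5}) (nhds y)"
      by (rule eventually_nhds_in_open) (intro open_Collect_less continuous_intros, use True in simp)
    then have "eventually (\<lambda>x. plateau x = 1) (nhds y)" by (auto elim!: eventually_mono intro: plateau_eq_1)
    then show ?thesis using that by blast
  next
    case False
    then have "1 < \<bar>y\<bar>" using assms by auto
    have "eventually (\<lambda>x. x \<in> {x. 1 < \<bar>x\<bar>}) (nhds y)"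
      by (rule eventually_nhds_in_open) (intro open_Collect_less continuous_intros, use \<open>1 < \<bar>y\<bar>\<close> in simp)
    then have "eventually (\<lambda>x. plateau x = 0) (nhds y)" by (auto elim!: eventually_mono intro: plateau_eq_0)
    then show ?thesis using that by blast
  qed
  have "((\<lambda>x. c) has_real_derivative plateau_deriv y) (at y)"
    using DERIV_cong_ev[OF refl ev refl] plateau_has_real_derivative by blast
  then show ?thesis using DERIV_const DERIV_unique by blast
qed

lemma continuous_compact_support_bounded:
  fixes f :: "real \<Rightarrow> 'b::real_normed_vector"
  assumes "continuous_on UNIV f" "compact K" "\<And>x. x \<notin> K \<Longrightarrow> f x = 0"
  shows "\<exists>B. \<forall>x. norm (f x) \<le> B"
proof -
  have "compact (f ` K)" using assms by (metis compact_continuous_image continuous_on_subset subset_UNIV)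
  then obtain B where "\<forall>y\<in>f ` K. norm y \<le> B" using compact_imp_bounded bounded_iff by metis
  then have "norm (f x) \<le> max B 0" for x
    using assms(3)[of x] by (cases "x \<in> K") (auto simp: le_max_iff_disj)
  then show ?thesis by blast
qed

lemma plateau_deriv_bounded: "\<exists>M. \<forall>y. \<bar>plateau_deriv y\<bar> \<le> M"
proof -
  have "continuous_on UNIV (dx (\<lambda>x. complex_of_real (plateau x)))"
    using real_smooth_plateau smooth_upto_Suc_continuous[of 0] by (simp add: real_smooth_iff)
  then have "continuous_on UNIV plateau_deriv"
    unfolding plateau_deriv_def[abs_def] by (intro continuous_intros)
  then show ?thesis
    using continuous_compact_support_bounded[OF _ compact_Icc[of "-1" 1]] plateau_deriv_eq_0 by force
qed

section \<open>A logarithmic cutoff at the origin\<close>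

definition log_cutoff :: "nat \<Rightarrow> real \<Rightarrow> real" where
  "log_cutoff N x = (\<Sum>j\<in>{N..<2*N}. plateau (2^j * x)) / real N"

definition log_cutoff_deriv :: "nat \<Rightarrow> real \<Rightarrow> real" where
  "log_cutoff_deriv N x = (\<Sum>j\<in>{N..<2*N}. 2^j * plateau_deriv (2^j * x)) / real N"

lemma log_cutoff_has_real_derivative: "(log_cutoff N has_real_derivative log_cutoff_deriv N x) (at x)"
  unfolding log_cutoff_def[abs_def] log_cutoff_deriv_def
  by (intro DERIV_cdivide DERIV_sum)
    (auto intro!: DERIV_chain2[OF plateau_has_real_derivative, THEN DERIV_cong] derivative_eq_intros)

lemma real_smooth_log_cutoff: "real_smooth (log_cutoff N)"
proof -
  have "real_smooth (\<lambda>x. (\<Sum>j\<in>{N..<2*N}. plateau (2^j * x)) * (1 / real N))"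
    by (intro real_smooth_mult real_smooth_sum real_smooth_const real_smooth_compose[OF _ real_smooth_plateau]
        real_smooth_ident) auto
  then show ?thesis unfolding log_cutoff_def[abs_def] by simp
qed

lemma log_cutoff_eq_1:
  assumes "1 \<le> N" "\<bar>x\<bar> \<le> (3/5) / 4^N" shows "log_cutoff N x = 1"
proof -
  have "plateau (2^j * x) = 1" if "j \<in> {N..<2*N}" for j
  proof (rule plateau_eq_1)
    have "(2::real)^j \<le> 2^(2*N)" using that by (intro power_increasing) auto
    also have "\<dots> = 4^N" by (simp add: power_mult)
    finally have "2^j * \<bar>x\<bar> \<le> 4^N * ((3/5) / 4^N)"
      using assms(2) by (intro mult_mono) auto
    then show "\<bar>2^j * x\<bar> \<le> 3/5" by (simp add: abs_mult)
  qed
  then show ?thesis using assms(1) by (simp add: log_cutoff_def)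
qed

lemma log_cutoff_eq_0:
  assumes "1 / 2^N \<le> \<bar>x\<bar>" shows "log_cutoff N x = 0"
proof -
  have "plateau (2^j * x) = 0" if "j \<in> {N..<2*N}" for j
  proof (rule plateau_eq_0)
    have "(2::real)^N \<le> 2^j" using that by (intro power_increasing) auto
    then have "2^N * (1 / 2^N) \<le> 2^j * \<bar>x\<bar>" using assms by (intro mult_mono) auto
    then show "1 \<le> \<bar>2^j * x\<bar>" by (simp add: abs_mult)
  qed
  then show ?thesis by (simp add: log_cutoff_def)
qed

lemma log_cutoff_nonneg: "0 \<le> log_cutoff N x"
  unfolding log_cutoff_def by (intro divide_nonneg_nonneg sum_nonneg) (simp_all add: plateau_nonneg)

lemma log_cutoff_le_1: "log_cutoff N x \<le> 1"
proof -
  have "(\<Sum>j\<in>{N..<2*N}. plateau (2^j * x)) \<le> (\<Sum>j\<in>{N..<2*N}. 1)"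
    by (intro sum_mono) (simp add: plateau_le_1)
  then show ?thesis by (cases "N = 0") (auto simp: log_cutoff_def)
qed

lemma log_cutoff_deriv_eq_0:
  assumes "1 / 2^N < \<bar>x\<bar>" shows "log_cutoff_deriv N x = 0"
proof -
  have "plateau_deriv (2^j * x) = 0" if "j \<in> {N..<2*N}" for j
  proof (rule plateau_deriv_eq_0)
    have "(2::real)^N \<le> 2^j" using that by (intro power_increasing) auto
    then have "2^N * (1 / 2^N) < 2^j * \<bar>x\<bar>" using assms by (intro mult_le_less_imp_less) auto
    then show "\<bar>2^j * x\<bar> < 3/5 \<or> 1 < \<bar>2^j * x\<bar>" by (simp add: abs_mult)
  qed
  then show ?thesis by (simp add: log_cutoff_deriv_def)
qed

lemma power2_sum_of_disjoint_support:
  fixes a :: "'i \<Rightarrow> 'a::comm_ring_1"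
  assumes "finite J" "\<And>i j. i \<in> J \<Longrightarrow> j \<in> J \<Longrightarrow> a i \<noteq> 0 \<Longrightarrow> a j \<noteq> 0 \<Longrightarrow> i = j"
  shows "(\<Sum>j\<in>J. a j)^2 = (\<Sum>j\<in>J. (a j)^2)"
proof (cases "\<exists>i\<in>J. a i \<noteq> 0")
  case False then show ?thesis by simp
next
  case True
  then obtain i where i: "i \<in> J" "a i \<noteq> 0" by blast
  have "\<And>j. j \<in> J - {i} \<Longrightarrow> a j = 0" using assms(2) i by blast
  then have "(\<Sum>j\<in>J. a j) = a i" "(\<Sum>j\<in>J. (a j)^2) = (a i)^2"
    using sum.remove[OF assms(1) i(1), of a] sum.remove[OF assms(1) i(1), of "\<lambda>j. (a j)^2"] by simp_all
  then show ?thesis by simp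
qed

definition dyadic_indicator :: "nat \<Rightarrow> real \<Rightarrow> real" where
  "dyadic_indicator j = indicator {- (1/2^j) .. 1/2^j}"

lemma integrable_dyadic_indicator: "integrable lborel (dyadic_indicator j)"
  unfolding dyadic_indicator_def
  by (rule integrable_real_indicator) (auto simp: emeasure_lborel_Icc_eq)

lemma integral_dyadic_indicator: "integral\<^sup>L lborel (dyadic_indicator j) = 2 / 2^j"
  unfolding dyadic_indicator_def by simp

lemma dyadic_indicator_nonneg: "0 \<le> dyadic_indicator j x"
  by (simp add: dyadic_indicator_def)

lemma dyadic_indicator_eq_1: "\<bar>x\<bar> \<le> 1/2^j \<Longrightarrow> dyadic_indicator j x = 1"
  by (simp add: dyadic_indicator_def indicator_def abs_le_iff)

lemma plateau_deriv_dyadic_nonzero: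
  assumes "plateau_deriv (2^j * x) \<noteq> 0"
  shows "3/5 \<le> 2^j * \<bar>x\<bar>" "2^j * \<bar>x\<bar> \<le> 1"
proof -
  have "\<not> (\<bar>2^j * x\<bar> < 3/5 \<or> 1 < \<bar>2^j * x\<bar>)" using plateau_deriv_eq_0 assms by blast
  then show "3/5 \<le> 2^j * \<bar>x\<bar>" "2^j * \<bar>x\<bar> \<le> 1" by (simp_all add: abs_mult)
qed

lemma plateau_deriv_dyadic_disjoint:
  assumes "plateau_deriv (2^i * x) \<noteq> 0" "plateau_deriv (2^j * x) \<noteq> 0"
  shows "i = j"
proof (rule ccontr)
  have shell: "\<not> 2 * 2^m * \<bar>x\<bar> \<le> 2^n * \<bar>x\<bar>"
    if "plateau_deriv (2^m * x) \<noteq> 0" "plateau_deriv (2^n * x) \<noteq> 0" for m n :: nat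
    using plateau_deriv_dyadic_nonzero[OF that(1)] plateau_deriv_dyadic_nonzero[OF that(2)] by linarith
  have step: "2 * 2^m * \<bar>x\<bar> \<le> 2^n * \<bar>x\<bar>" if "m < n" for m n :: nat
  proof -
    have "(2::real)^(Suc m) \<le> 2^n" using that by (intro power_increasing) auto
    then show ?thesis by (intro mult_right_mono) auto
  qed
  assume "i \<noteq> j"
  then consider "i < j" | "j < i" by linarith
  then show False
    by cases (use shell[OF assms] shell[OF assms(2,1)] step in blast)+
qed

lemma abs_times_log_cutoff_deriv_le:
  assumes M: "\<And>y. \<bar>plateau_deriv y\<bar> \<le> M"
  shows "\<bar>x\<bar> * (log_cutoff_deriv N x)^2
    \<le> (M^2 / (real N)^2) * (\<Sum>j\<in>{N..<2*N}. 2^j * dyadic_indicator j x)"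
proof -
  define a where "a j = (2::real)^j * plateau_deriv (2^j * x)" for j
  have sq: "(log_cutoff_deriv N x)^2 = (\<Sum>j\<in>{N..<2*N}. (a j)^2) / (real N)^2"
    unfolding log_cutoff_deriv_def a_def[symmetric] power_divide
    by (subst power2_sum_of_disjoint_support) (auto simp: a_def dest: plateau_deriv_dyadic_disjoint)
  have summand: "\<bar>x\<bar> * (a j)^2 \<le> M^2 * (2^j * dyadic_indicator j x)" for j
  proof (cases "plateau_deriv (2^j * x) = 0")
    case True then show ?thesis by (simp add: a_def dyadic_indicator_nonneg)
  next
    case False
    note shell = plateau_deriv_dyadic_nonzero[OF False]
    have "(plateau_deriv (2^j * x))^2 \<le> M^2"
      using M[of "2^j*x"] by (simp add: power2_le_iff_abs_le)
    have "\<bar>x\<bar> * (a j)^2 = (2^j * \<bar>x\<bar>) * 2^j * (plateau_deriv (2^j * x))^2"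
      by (simp add: a_def power2_eq_square)
    also have "\<dots> \<le> 1 * 2^j * M^2"
      using shell \<open>(plateau_deriv (2^j * x))^2 \<le> M^2\<close> by (intro mult_mono) auto
    also have "\<dots> = M^2 * (2^j * dyadic_indicator j x)"
      using shell by (simp add: dyadic_indicator_eq_1 field_simps)
    finally show ?thesis .
  qed
  have "\<bar>x\<bar> * (log_cutoff_deriv N x)^2 = (\<Sum>j\<in>{N..<2*N}. \<bar>x\<bar> * (a j)^2) / (real N)^2"
    by (simp add: sq sum_distrib_left)
  also have "\<dots> \<le> (\<Sum>j\<in>{N..<2*N}. M^2 * (2^j * dyadic_indicator j x)) / (real N)^2"
    by (intro divide_right_mono sum_mono summand) auto
  also have "\<dots> = (M^2 / (real N)^2) * (\<Sum>j\<in>{N..<2*N}. 2^j * dyadic_indicator j x)"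
    by (simp add: sum_distrib_left sum_divide_distrib)
  finally show ?thesis .
qed

lemma notin_tsupp_eq_0: "x \<notin> tsupp f \<Longrightarrow> f x = 0"
  unfolding tsupp_def using closure_subset[of "{x. f x \<noteq> 0}"] by auto

lemma dx_notin_tsupp: "x \<notin> tsupp f \<Longrightarrow> dx f x = 0"
proof -
  assume x: "x \<notin> tsupp f"
  have "(f has_vector_derivative 0) (at x)"
  proof (rule has_vector_derivative_transform_within_open[of "\<lambda>y. 0" _ _ "- tsupp f"])
    show "open (- tsupp f)" unfolding tsupp_def by (intro open_Compl closed_closure)
  qed (use x notin_tsupp_eq_0 in \<open>auto intro: derivative_intros\<close>)
  then show ?thesis by (rule dx_eqI)
qed

lemma tsupp_subset_closed: "closed K \<Longrightarrow> (\<And>x. x \<notin> K \<Longrightarrow> f x = 0) \<Longrightarrow> tsupp f \<subseteq> K"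
  unfolding tsupp_def by (rule closure_minimal) auto

lemma Cc_infI:
  assumes "smooth f" "compact K" "\<And>x. x \<notin> K \<Longrightarrow> f x = 0" "K \<subseteq> U"
  shows "f \<in> Cc_inf U"
proof -
  have t: "tsupp f \<subseteq> K" by (rule tsupp_subset_closed[OF compact_imp_closed[OF assms(2)] assms(3)])
  have "bounded (tsupp f)" by (rule bounded_subset[OF compact_imp_bounded[OF assms(2)] t])
  then have "compact (tsupp f)" unfolding tsupp_def by (simp add: compact_eq_bounded_closed)
  then show ?thesis using assms(1,4) t unfolding Cc_inf_def by blast
qed

lemma Cc_inf_mono: "U \<subseteq> V \<Longrightarrow> Cc_inf U \<subseteq> Cc_inf V"
  unfolding Cc_inf_def by blast

lemma Cc_inf_smooth_upto: "\<phi> \<in> Cc_inf U \<Longrightarrow> smooth_upto k \<phi>"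
  unfolding Cc_inf_def smooth_iff_smooth_upto by blast

lemma Cc_inf_differentiable: "\<phi> \<in> Cc_inf U \<Longrightarrow> \<phi> differentiable (at x)"
  using Cc_inf_smooth_upto smooth_upto_imp_differentiable by blast

lemma Cc_inf_continuous: "\<phi> \<in> Cc_inf U \<Longrightarrow> continuous_on UNIV \<phi>"
  and Cc_inf_continuous_dx: "\<phi> \<in> Cc_inf U \<Longrightarrow> continuous_on UNIV (dx \<phi>)"
  using Cc_inf_smooth_upto[of \<phi> U 1] smooth_upto_Suc_continuous[of 0 \<phi>] by simp_all

lemma Cc_inf_bounded:
  assumes "\<phi> \<in> Cc_inf U"
  shows "\<exists>B. \<forall>x. norm (\<phi> x) \<le> B" and "\<exists>B. \<forall>x. norm (dx \<phi> x) \<le> B"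
proof -
  have K: "compact (tsupp \<phi>)" using assms by (simp add: Cc_inf_def)
  show "\<exists>B. \<forall>x. norm (\<phi> x) \<le> B"
    by (rule continuous_compact_support_bounded[of \<phi> "tsupp \<phi>"])
      (use Cc_inf_continuous[OF assms] K notin_tsupp_eq_0 in auto)
  show "\<exists>B. \<forall>x. norm (dx \<phi> x) \<le> B"
    by (rule continuous_compact_support_bounded[of "dx \<phi>" "tsupp \<phi>"])
      (use Cc_inf_continuous_dx[OF assms] K dx_notin_tsupp in auto)
qed

lemma L2_continuous_compact_support:
  assumes "continuous_on UNIV f" "compact K" "\<And>x. x \<notin> K \<Longrightarrow> f x = 0"
  shows "L2 f"
  unfolding L2_def
proof
  show "f \<in> borel_measurable lborel"
    using borel_measurable_continuous_onI[OF assms(1)] by simp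
  have "integrable lborel (\<lambda>x. indicator K x *\<^sub>R (cmod (f x))\<^sup>2)"
    by (rule borel_integrable_compact[OF assms(2)])
      (use assms(1) in \<open>auto intro!: continuous_intros intro: continuous_on_subset\<close>)
  moreover have "(\<lambda>x. indicator K x *\<^sub>R (cmod (f x))\<^sup>2) = (\<lambda>x. (cmod (f x))\<^sup>2)"
    using assms(3) by (force simp: indicator_def)
  ultimately show "integrable lborel (\<lambda>x. (cmod (f x))\<^sup>2)" by simp
qed

lemma L2_Cc_inf: "\<phi> \<in> Cc_inf U \<Longrightarrow> L2 \<phi>"
  by (rule L2_continuous_compact_support[OF Cc_inf_continuous _ notin_tsupp_eq_0])
    (auto simp: Cc_inf_def)

lemma c_delta_nonneg: "0 \<le> c_delta \<delta> x"
  by (simp add: c_delta_def)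

lemma c_delta_le_1: "0 \<le> \<delta> \<Longrightarrow> c_delta \<delta> x \<le> 1"
proof -
  assume "0 \<le> \<delta>"
  moreover have "x\<^sup>2 / (1 + x\<^sup>2) \<le> 1" by (simp add: divide_le_eq_1 add_pos_nonneg)
  ultimately have "(x\<^sup>2 / (1 + x\<^sup>2)) powr \<delta> \<le> 1 powr \<delta>" by (intro powr_mono2) auto
  then show ?thesis by (simp add: c_delta_def)
qed

lemma L2_Xop:
  assumes "\<phi> \<in> Cc_inf U" "0 \<le> \<delta>"
  shows "L2 (Xop \<delta> \<phi>)"
  unfolding L2_def
proof
  have "dx \<phi> \<in> borel_measurable borel"
    using borel_measurable_continuous_onI[OF Cc_inf_continuous_dx[OF assms(1)]] .
  moreover have "c_delta \<delta> \<in> borel_measurable borel"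
    unfolding c_delta_def[abs_def] by measurable
  ultimately show m: "Xop \<delta> \<phi> \<in> borel_measurable lborel"
    unfolding Xop_def[abs_def] by simp
  have "L2 (dx \<phi>)"
    by (rule L2_continuous_compact_support[OF Cc_inf_continuous_dx[OF assms(1)] _ dx_notin_tsupp])
      (use assms(1) in \<open>simp_all add: Cc_inf_def\<close>)
  then show "integrable lborel (\<lambda>x. (cmod (Xop \<delta> \<phi> x))\<^sup>2)"
    unfolding L2_def
  proof (elim conjE Bochner_Integration.integrable_bound)
    show "(\<lambda>x. (cmod (Xop \<delta> \<phi> x))\<^sup>2) \<in> borel_measurable lborel" using m by measurable
    have "cmod (Xop \<delta> \<phi> x) \<le> cmod (dx \<phi> x)" for x
      using c_delta_le_1[OF assms(2), of x]
      by (simp add: Xop_def norm_mult mult_left_le_one_le c_delta_nonneg)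
    then show "AE x in lborel. norm ((cmod (Xop \<delta> \<phi> x))\<^sup>2) \<le> norm ((cmod (dx \<phi> x))\<^sup>2)"
      by (simp add: power_mono)
  qed
qed

lemma norm_Xop_diff_power2:
  "(cmod (Xop \<delta> \<psi> x - Xop \<delta> \<phi> x))\<^sup>2 = c_delta \<delta> x * (cmod (dx \<phi> x - dx \<psi> x))\<^sup>2"
proof -
  have "Xop \<delta> \<psi> x - Xop \<delta> \<phi> x = - (complex_of_real (sqrt (c_delta \<delta> x)) * (dx \<phi> x - dx \<psi> x))"
    by (simp add: Xop_def algebra_simps)
  then show ?thesis using c_delta_nonneg[of \<delta> x] by (simp add: norm_mult power_mult_distrib)
qed

lemma power2_add_le: "((a::real) + b)^2 \<le> 2*a^2 + 2*b^2"
proof -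
  have "(a + b)^2 + (a - b)^2 = 2*a^2 + 2*b^2" by (simp add: power2_eq_square algebra_simps)
  then show ?thesis by (smt (verit) zero_le_power2)
qed

lemma power2_norm_diff_le:
  fixes a b c :: "'a::real_normed_vector"
  shows "(norm (a - c))\<^sup>2 \<le> 2 * (norm (a - b))\<^sup>2 + 2 * (norm (b - c))\<^sup>2"
proof -
  have "norm (a - c) \<le> norm (a - b) + norm (b - c)" using norm_triangle_ineq[of "a - b" "b - c"] by simp
  then have "(norm (a - c))\<^sup>2 \<le> (norm (a - b) + norm (b - c))\<^sup>2" by (simp add: power_mono)
  then show ?thesis using power2_add_le order_trans by blast
qed

lemma integrable_power2_norm_diff:
  assumes "L2 f" "L2 g"
  shows "integrable lborel (\<lambda>x. (cmod (f x - g x))\<^sup>2)"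
proof (rule Bochner_Integration.integrable_bound)
  show "integrable lborel (\<lambda>x. 2 * (cmod (f x - 0))\<^sup>2 + 2 * (cmod (0 - g x))\<^sup>2)"
    using assms by (auto simp: L2_def)
  show "(\<lambda>x. (cmod (f x - g x))\<^sup>2) \<in> borel_measurable lborel"
    using assms by (auto simp: L2_def)
  show "AE x in lborel. norm ((cmod (f x - g x))\<^sup>2) \<le> norm (2 * (cmod (f x - 0))\<^sup>2 + 2 * (cmod (0 - g x))\<^sup>2)"
  proof (rule AE_I2)
    fix x show "norm ((cmod (f x - g x))\<^sup>2) \<le> norm (2 * (cmod (f x - 0))\<^sup>2 + 2 * (cmod (0 - g x))\<^sup>2)"
      using power2_norm_diff_le[where a = "f x" and b = 0 and c = "g x"] by simp
  qed
qed

lemma L2dist2_nonneg: "0 \<le> L2dist2 f g"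
  unfolding L2dist2_def by (rule integral_nonneg_AE) auto

lemma L2dist2_triangle:
  assumes "L2 a" "L2 b" "L2 c"
  shows "L2dist2 a c \<le> 2 * L2dist2 a b + 2 * L2dist2 b c"
proof -
  have "L2dist2 a c \<le> (LINT x|lborel. 2 * (cmod (a x - b x))\<^sup>2 + 2 * (cmod (b x - c x))\<^sup>2)"
    unfolding L2dist2_def
    using integrable_power2_norm_diff assms power2_norm_diff_le
    by (intro integral_mono) auto
  also have "\<dots> = 2 * L2dist2 a b + 2 * L2dist2 b c"
    unfolding L2dist2_def using integrable_power2_norm_diff assms by simp
  finally show ?thesis .
qed

lemma L2dist2_tendsto_0_trans:
  assumes "\<And>n. L2 (a n)" "\<And>n. L2 (b n)" "L2 c"
    and "(\<lambda>n. L2dist2 (a n) (b n)) \<longlonglongrightarrow> 0" "(\<lambda>n. L2dist2 (b n) c) \<longlonglongrightarrow> 0"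
  shows "(\<lambda>n. L2dist2 (a n) c) \<longlonglongrightarrow> 0"
proof (rule tendsto_sandwich[OF _ _ tendsto_const])
  show "\<forall>\<^sub>F n in sequentially. 0 \<le> L2dist2 (a n) c" by (simp add: L2dist2_nonneg)
  show "\<forall>\<^sub>F n in sequentially. L2dist2 (a n) c \<le> 2 * L2dist2 (a n) (b n) + 2 * L2dist2 (b n) c"
    using L2dist2_triangle assms(1-3) by simp
  show "(\<lambda>n. 2 * L2dist2 (a n) (b n) + 2 * L2dist2 (b n) c) \<longlonglongrightarrow> 0"
    using tendsto_add[OF tendsto_mult_right_zero[OF assms(4)] tendsto_mult_right_zero[OF assms(5)]] by simp
qed

lemma
  fixes F :: "real \<Rightarrow> real"
  assumes "integrable lborel F" "\<And>x. 0 \<le> F x"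
  shows integrable_on_Icc_if_integrable_lborel: "F integrable_on {a..b}"
    and integral_Icc_le_integral_lborel: "integral {a..b} F \<le> integral\<^sup>L lborel F"
proof -
  have si: "set_integrable lborel {a..b} F"
    unfolding set_integrable_def by (rule integrable_mult_indicator) (use assms in auto)
  note e = set_borel_integral_eq_integral[OF si]
  show "F integrable_on {a..b}" by (rule e(1))
  have "(LINT x : {a..b} | lborel. F x) \<le> integral\<^sup>L lborel F"
    unfolding set_lebesgue_integral_def
    using si assms by (intro integral_mono) (auto simp: set_integrable_def indicator_def)
  then show "integral {a..b} F \<le> integral\<^sup>L lborel F" using e(2) by simp
qed

section \<open>The case \<open>\<delta> < 1/2\<close>\<close>

lemma integral_less_imp_exists_less:
  fixes f :: "real \<Rightarrow> real"
  assumes "f integrable_on {a..b}" "a \<le> b" "integral {a..b} f < e * (b - a)"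
  shows "\<exists>t\<in>{a..b}. f t < e"
proof (rule ccontr)
  assume "\<not> ?thesis"
  then have "integral {a..b} (\<lambda>_. e) \<le> integral {a..b} f"
    by (intro integral_le assms(1)) (auto simp: not_less)
  then show False using assms(2,3) by (simp add: mult.commute)
qed

lemma norm_diff_le_integral_norm_derivative:
  fixes u :: "real \<Rightarrow> 'a::banach"
  assumes "a \<le> t" "t \<le> b" "\<And>x. x \<in> {a..b} \<Longrightarrow> (u has_vector_derivative u' x) (at x within {a..b})"
    and "continuous_on {a..b} u'"
  shows "norm (u t - u a) \<le> integral {a..b} (\<lambda>x. norm (u' x))"
proof -
  have ftc: "(u' has_integral (u t - u a)) {a..t}"
    using assms by (intro fundamental_theorem_of_calculus)
      (auto intro: has_vector_derivative_within_subset[of _ _ _ "{a..b}"])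
  have cont: "continuous_on {a..b} (\<lambda>x. norm (u' x))"
    using assms(4) by (intro continuous_intros)
  then have int_t: "(\<lambda>x. norm (u' x)) integrable_on {a..t}"
    using assms(2) by (intro integrable_continuous_interval) (auto elim: continuous_on_subset)
  have "norm (u t - u a) \<le> integral {a..t} (\<lambda>x. norm (u' x))"
    using integral_norm_bound_integral[OF has_integral_integrable[OF ftc] int_t] ftc
    by (simp add: integral_unique)
  also have "\<dots> \<le> integral {a..b} (\<lambda>x. norm (u' x))"
    using assms(1,2) by (intro integral_subset_le int_t integrable_continuous_interval cont) auto
  finally show ?thesis .
qed

lemma le_weighted_amgm:
  fixes v w g l :: real
  assumes "0 < w" "1 \<le> w * g" "0 < l"
  shows "v \<le> l/2 * g + w * v\<^sup>2 / (2*l)"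
proof -
  have "(2*l*w) * v \<le> l\<^sup>2 + (w * v)\<^sup>2"
    using sum_squares_bound[of l "w * v"] by (simp add: algebra_simps power2_eq_square)
  also have "\<dots> \<le> l\<^sup>2 * (w * g) + (w * v)\<^sup>2" using assms by (simp add: mult_le_cancel_left1)
  also have "\<dots> = (2*l*w) * (l/2 * g + w * v\<^sup>2 / (2*l))"
    using assms by (simp add: field_simps power2_eq_square)
  finally show ?thesis using assms by (simp add: mult_le_cancel_left_pos)
qed

lemma integral_le_weighted_amgm:
  fixes v w g :: "real \<Rightarrow> real"
  assumes "v integrable_on {a..b}" "g integrable_on {a..b}" "(\<lambda>x. w x * (v x)\<^sup>2) integrable_on {a..b}"
    and "\<And>x. x \<in> {a<..b} \<Longrightarrow> 0 < w x" "\<And>x. x \<in> {a<..b} \<Longrightarrow> 1 \<le> w x * g x" "0 < l"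
  shows "integral {a..b} v \<le> l/2 * integral {a..b} g + 1/(2*l) * integral {a..b} (\<lambda>x. w x * (v x)\<^sup>2)"
proof -
  define G where "G x = l/2 * g x + 1/(2*l) * (w x * (v x)\<^sup>2)" for x
  have G: "(G has_integral l/2 * integral {a..b} g + 1/(2*l) * integral {a..b} (\<lambda>x. w x * (v x)\<^sup>2)) {a..b}"
    unfolding G_def[abs_def] using assms(2,3)
    by (intro has_integral_add has_integral_mult_right integrable_integral)
  \<comment> \<open>the hypotheses hold only on \<open>{a<..b}\<close>, so \<open>G\<close> is modified at \<open>a\<close>\<close>
  define G' where "G' x = (if x = a then v a else G x)" for x
  have G': "(G' has_integral l/2 * integral {a..b} g + 1/(2*l) * integral {a..b} (\<lambda>x. w x * (v x)\<^sup>2)) {a..b}"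
    by (rule has_integral_spike[OF negligible_sing[of a] _ G]) (simp add: G'_def)
  have "v x \<le> G' x" if "x \<in> {a..b}" for x
    using that le_weighted_amgm[OF assms(4,5,6)] by (auto simp: G'_def G_def)
  then show ?thesis
    using has_integral_le[OF integrable_integral[OF assms(1)] G'] by simp
qed

text \<open>On \<open>(0,1]\<close>, \<open>1/c\<^sub>\<delta>(x) = ((1 + x\<^sup>2)/x\<^sup>2)\<^sup>\<delta> \<le> 2\<^sup>\<delta> x\<^sup>-\<^sup>2\<^sup>\<delta>\<close>, which is integrable exactly when \<open>\<delta> < 1/2\<close>.\<close>

definition c_delta_recip_majorant :: "real \<Rightarrow> real \<Rightarrow> real" where
  "c_delta_recip_majorant \<delta> x = 2 powr \<delta> * x powr (- (2 * \<delta>))"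

lemma c_delta_recip_majorant_integrable:
  "0 \<le> \<delta> \<Longrightarrow> \<delta> < 1/2 \<Longrightarrow> c_delta_recip_majorant \<delta> integrable_on {0..1}"
proof -
  assume "0 \<le> \<delta>" "\<delta> < 1/2"
  then have "(\<lambda>x. x powr (- (2 * \<delta>))) integrable_on {0..1}"
    by (intro integrable_on_powr_from_0) auto
  from integrable_cmul[OF this, of "2 powr \<delta>"] show ?thesis
    unfolding c_delta_recip_majorant_def[abs_def] by simp
qed

lemma c_delta_pos: "0 < x \<Longrightarrow> 0 < c_delta \<delta> x"
  using add_pos_nonneg[of 1 "x\<^sup>2"] by (simp add: c_delta_def)

lemma c_delta_times_recip_majorant_ge_1:
  assumes "0 \<le> \<delta>" "0 < x" "x \<le> 1"
  shows "1 \<le> c_delta \<delta> x * c_delta_recip_majorant \<delta> x"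
proof -
  have p: "0 < 1 + x\<^sup>2" by (simp add: add_pos_nonneg)
  have xp: "x powr (- (2 * \<delta>)) = inverse ((x\<^sup>2) powr \<delta>)"
    using assms by (simp add: powr_minus powr_powr[symmetric] powr_realpow)
  have "c_delta \<delta> x * c_delta_recip_majorant \<delta> x = (x\<^sup>2 / (1 + x\<^sup>2)) powr \<delta> * 2 powr \<delta> / (x\<^sup>2) powr \<delta>"
    using assms p by (cases "\<delta> = 0") (auto simp: c_delta_def c_delta_recip_majorant_def xp divide_inverse)
  also have "\<dots> = (2 / (1 + x\<^sup>2)) powr \<delta>"
    using assms by (simp add: powr_mult[symmetric] powr_divide[symmetric])
  also have "1 \<le> \<dots>"
  proof (rule ge_one_powr_ge_zero)
    have "x\<^sup>2 \<le> 1" using assms by (simp add: power_le_one)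
    then show "1 \<le> 2 / (1 + x\<^sup>2)" using p by (simp add: le_divide_eq)
  qed (use assms in simp)
  finally show ?thesis .
qed

definition cplateau :: "real \<Rightarrow> complex" where
  "cplateau x = complex_of_real (plateau x)"

lemma cplateau_Cc_inf: "cplateau \<in> Cc_inf UNIV"
  by (rule Cc_infI[of _ "{-1..1}"])
    (use real_smooth_plateau in \<open>auto simp: cplateau_def[abs_def] real_smooth_def intro!: plateau_eq_0\<close>)

lemma cplateau_0: "cplateau 0 = 1"
  by (simp add: cplateau_def plateau_eq_1)

lemma L2dist2_less_imp_exists_close:
  assumes "L2 f" "L2 g" "0 \<le> e" "L2dist2 f g < e\<^sup>2"
  shows "\<exists>t\<in>{0..1}. cmod (f t - g t) < e"
proof -
  have L: "integrable lborel (\<lambda>x. (cmod (f x - g x))\<^sup>2)"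
    by (rule integrable_power2_norm_diff[OF assms(1,2)])
  have "integral {0..1} (\<lambda>x. (cmod (f x - g x))\<^sup>2) < e\<^sup>2 * (1 - 0)"
    using integral_Icc_le_integral_lborel[OF L zero_le_power2, of 0 1] assms(4)
    by (simp add: L2dist2_def)
  then obtain t where "t \<in> {0..1}" "(cmod (f t - g t))\<^sup>2 < e\<^sup>2"
    using integral_less_imp_exists_less[OF integrable_on_Icc_if_integrable_lborel[OF L zero_le_power2],
        where a = 0 and b = 1 and e = "e\<^sup>2"]
    by auto
  then show ?thesis using assms(3) power2_less_imp_less by blast
qed

lemma integral_norm_dx_diff_le:
  assumes d: "0 \<le> \<delta>" "\<delta> < 1/2" and \<phi>: "\<phi> \<in> Cc_inf U" and \<psi>: "\<psi> \<in> Cc_inf V" and l: "0 < l"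
  shows "integral {0..1} (\<lambda>x. cmod (dx \<phi> x - dx \<psi> x))
    \<le> l/2 * integral {0..1} (c_delta_recip_majorant \<delta>) + L2dist2 (Xop \<delta> \<psi>) (Xop \<delta> \<phi>) / (2*l)"
proof -
  define w where "w x = c_delta \<delta> x * (cmod (dx \<phi> x - dx \<psi> x))\<^sup>2" for x
  have L: "integrable lborel w"
    using integrable_power2_norm_diff[OF L2_Xop[OF \<psi> d(1)] L2_Xop[OF \<phi> d(1)]]
    by (simp add: w_def[abs_def] norm_Xop_diff_power2)
  have w_nonneg: "0 \<le> w x" for x by (simp add: w_def c_delta_nonneg)
  have cont: "continuous_on UNIV (\<lambda>x. cmod (dx \<phi> x - dx \<psi> x))"
    by (intro continuous_on_norm continuous_on_diff Cc_inf_continuous_dx[OF \<phi>] Cc_inf_continuous_dx[OF \<psi>])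
  have "(\<lambda>x. cmod (dx \<phi> x - dx \<psi> x)) integrable_on {0..1}"
    by (rule integrable_continuous_interval[OF continuous_on_subset[OF cont]]) simp
  then have "integral {0..1} (\<lambda>x. cmod (dx \<phi> x - dx \<psi> x))
      \<le> l/2 * integral {0..1} (c_delta_recip_majorant \<delta>) + 1/(2*l) * integral {0..1} w"
    unfolding w_def
    by (rule integral_le_weighted_amgm[OF _ c_delta_recip_majorant_integrable[OF d]
          integrable_on_Icc_if_integrable_lborel[OF L w_nonneg, unfolded w_def] c_delta_pos
          c_delta_times_recip_majorant_ge_1[OF d(1)] l]) auto
  also have "\<dots> \<le> l/2 * integral {0..1} (c_delta_recip_majorant \<delta>) + L2dist2 (Xop \<delta> \<psi>) (Xop \<delta> \<phi>) / (2*l)"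
    using integral_Icc_le_integral_lborel[OF L w_nonneg, of 0 1] l
    by (simp add: L2dist2_def w_def[abs_def] norm_Xop_diff_power2 divide_right_mono)
  finally show ?thesis .
qed

lemma graph_distance_to_cplateau:
  assumes d: "0 \<le> \<delta>" "\<delta> < 1/2" and \<psi>: "\<psi> \<in> Cc_inf (UNIV - {0})" and l: "0 < l"
    and close: "L2dist2 \<psi> cplateau < 1/16"
  shows "3/4 \<le> l/2 * integral {0..1} (c_delta_recip_majorant \<delta>)
                + L2dist2 (Xop \<delta> \<psi>) (Xop \<delta> cplateau) / (2*l)"
proof -
  define u where "u x = cplateau x - \<psi> x" for x
  have "\<psi> 0 = 0" using \<psi> notin_tsupp_eq_0 by (auto simp: Cc_inf_def)
  then have u0: "u 0 = 1" by (simp add: u_def cplateau_0)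
  have "L2dist2 \<psi> cplateau < (1/4)\<^sup>2" using close by (simp add: power_divide)
  then obtain t where t: "t \<in> {0..1}" "cmod (\<psi> t - cplateau t) < 1/4"
    using L2dist2_less_imp_exists_close[OF L2_Cc_inf[OF \<psi>] L2_Cc_inf[OF cplateau_Cc_inf], of "1/4"] by auto
  have "(u has_vector_derivative dx cplateau x - dx \<psi> x) (at x)" for x
    unfolding u_def[abs_def]
    by (intro has_vector_derivative_diff has_vector_derivative_dx
        Cc_inf_differentiable[OF cplateau_Cc_inf] Cc_inf_differentiable[OF \<psi>])
  moreover have "continuous_on {0..1} (\<lambda>x. dx cplateau x - dx \<psi> x)"
    by (intro continuous_on_diff continuous_on_subset[OF Cc_inf_continuous_dx[OF cplateau_Cc_inf]]
        continuous_on_subset[OF Cc_inf_continuous_dx[OF \<psi>]]) auto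
  ultimately have "cmod (u t - u 0) \<le> integral {0..1} (\<lambda>x. cmod (dx cplateau x - dx \<psi> x))"
    using t(1) by (intro norm_diff_le_integral_norm_derivative) (auto intro: has_vector_derivative_at_within)
  also have "\<dots> \<le> l/2 * integral {0..1} (c_delta_recip_majorant \<delta>)
                   + L2dist2 (Xop \<delta> \<psi>) (Xop \<delta> cplateau) / (2*l)"
    by (rule integral_norm_dx_diff_le[OF d cplateau_Cc_inf \<psi> l])
  moreover have "1 \<le> cmod (u t) + cmod (u t - u 0)"
    using norm_triangle_ineq2[of "u 0" "u t"] u0 by (simp add: norm_minus_commute)
  ultimately show ?thesis
    using t(2) by (simp add: u_def norm_minus_commute)
qed

lemma closure_graph_mono: "D \<subseteq> D' \<Longrightarrow> closure_graph D T \<subseteq> closure_graph D' T"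
  unfolding closure_graph_def by blast

lemma closure_graph_punctured_subset:
  "closure_graph (Cc_inf (UNIV - {0})) T \<subseteq> closure_graph (Cc_inf UNIV) T"
  by (intro closure_graph_mono Cc_inf_mono) auto

lemma closure_graph_punctured_psubset:
  assumes d: "0 \<le> \<delta>" "\<delta> < 1/2"
  shows "closure_graph (Cc_inf (UNIV - {0})) (Xop \<delta>) \<subset> closure_graph (Cc_inf UNIV) (Xop \<delta>)"
proof -
  have "(cplateau, Xop \<delta> cplateau) \<in> closure_graph (Cc_inf UNIV) (Xop \<delta>)"
    unfolding closure_graph_def L2dist2_def
    using L2_Cc_inf[OF cplateau_Cc_inf] L2_Xop[OF cplateau_Cc_inf d(1)] cplateau_Cc_inf
    by (auto intro!: exI[of _ "\<lambda>n. cplateau"])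
  moreover have "(cplateau, Xop \<delta> cplateau) \<notin> closure_graph (Cc_inf (UNIV - {0})) (Xop \<delta>)"
  proof
    assume "(cplateau, Xop \<delta> cplateau) \<in> closure_graph (Cc_inf (UNIV - {0})) (Xop \<delta>)"
    then obtain \<phi> where \<phi>: "\<And>n. \<phi> n \<in> Cc_inf (UNIV - {0})"
      and lim: "(\<lambda>n. L2dist2 (\<phi> n) cplateau) \<longlonglongrightarrow> 0"
      and lim_X: "(\<lambda>n. L2dist2 (Xop \<delta> (\<phi> n)) (Xop \<delta> cplateau)) \<longlonglongrightarrow> 0"
      unfolding closure_graph_def by blast
    define K where "K = integral {0..1} (c_delta_recip_majorant \<delta>)"
    have "0 \<le> K" unfolding K_def
      by (rule integral_nonneg[OF c_delta_recip_majorant_integrable[OF d]])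
        (simp add: c_delta_recip_majorant_def)
    define l where "l = 1 / (4 * (K + 1))"
    have l: "0 < l" "l/2 * K \<le> 1/8" using \<open>0 \<le> K\<close> by (simp_all add: l_def field_simps)
    have "\<forall>\<^sub>F n in sequentially. L2dist2 (\<phi> n) cplateau < 1/16
        \<and> L2dist2 (Xop \<delta> (\<phi> n)) (Xop \<delta> cplateau) < l/4"
      using order_tendstoD(2)[OF lim, of "1/16"] order_tendstoD(2)[OF lim_X, of "l/4"] l
      by (simp add: eventually_conj)
    then obtain n where n: "L2dist2 (\<phi> n) cplateau < 1/16" "L2dist2 (Xop \<delta> (\<phi> n)) (Xop \<delta> cplateau) < l/4"
      by (auto simp: eventually_sequentially)
    have "3/4 \<le> l/2 * K + L2dist2 (Xop \<delta> (\<phi> n)) (Xop \<delta> cplateau) / (2*l)"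
      unfolding K_def by (rule graph_distance_to_cplateau[OF d \<phi> l(1) n(1)])
    moreover have "L2dist2 (Xop \<delta> (\<phi> n)) (Xop \<delta> cplateau) / (2*l) < 1/8"
      using n(2) l by (simp add: field_simps)
    ultimately show False using l by linarith
  qed
  ultimately show ?thesis using closure_graph_punctured_subset by blast
qed

section \<open>The case \<open>\<delta> \<ge> 1/2\<close>\<close>

lemma closure_graph_subset_if_graph_dense:
  assumes L2_D: "\<And>\<psi>. \<psi> \<in> D \<Longrightarrow> L2 \<psi> \<and> L2 (T \<psi>)" and L2_D': "\<And>\<phi>. \<phi> \<in> D' \<Longrightarrow> L2 \<phi> \<and> L2 (T \<phi>)"
    and dense: "\<And>\<phi> e. \<phi> \<in> D' \<Longrightarrow> 0 < e \<Longrightarrow> \<exists>\<psi>\<in>D. L2dist2 \<psi> \<phi> < e \<and> L2dist2 (T \<psi>) (T \<phi>) < e"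
  shows "closure_graph D' T \<subseteq> closure_graph D T"
proof safe
  fix f g assume "(f, g) \<in> closure_graph D' T"
  then obtain \<phi> where f: "L2 f" and g: "L2 g" and \<phi>: "\<And>n. \<phi> n \<in> D'"
    and lim: "(\<lambda>n. L2dist2 (\<phi> n) f) \<longlonglongrightarrow> 0" and lim_T: "(\<lambda>n. L2dist2 (T (\<phi> n)) g) \<longlonglongrightarrow> 0"
    unfolding closure_graph_def by blast
  have "\<forall>n. \<exists>\<psi>\<in>D. L2dist2 \<psi> (\<phi> n) < inverse (real (Suc n))
      \<and> L2dist2 (T \<psi>) (T (\<phi> n)) < inverse (real (Suc n))"
    using dense[OF \<phi>] by simp
  then obtain \<psi> where \<psi>: "\<And>n. \<psi> n \<in> D"
    and close: "\<And>n. L2dist2 (\<psi> n) (\<phi> n) < inverse (real (Suc n))"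
    and close_T: "\<And>n. L2dist2 (T (\<psi> n)) (T (\<phi> n)) < inverse (real (Suc n))"
    by metis
  have lim0: "(\<lambda>n. L2dist2 (a n) (b n)) \<longlonglongrightarrow> 0"
    if "\<And>n. L2dist2 (a n) (b n) < inverse (real (Suc n))" for a b :: "nat \<Rightarrow> real \<Rightarrow> complex"
  proof (rule tendsto_sandwich[OF _ _ tendsto_const LIMSEQ_inverse_real_of_nat])
    show "\<forall>\<^sub>F n in sequentially. L2dist2 (a n) (b n) \<le> inverse (real (Suc n))"
      using that by (intro always_eventually allI less_imp_le)
  qed (simp add: L2dist2_nonneg)
  have "(\<lambda>n. L2dist2 (\<psi> n) (\<phi> n)) \<longlonglongrightarrow> 0" "(\<lambda>n. L2dist2 (T (\<psi> n)) (T (\<phi> n))) \<longlonglongrightarrow> 0"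
    using lim0[OF close] lim0[OF close_T] .
  then have "(\<lambda>n. L2dist2 (\<psi> n) f) \<longlonglongrightarrow> 0" "(\<lambda>n. L2dist2 (T (\<psi> n)) g) \<longlonglongrightarrow> 0"
    using L2_D[OF \<psi>] L2_D'[OF \<phi>] f g lim lim_T
    by (auto intro: L2dist2_tendsto_0_trans[where b = \<phi>] L2dist2_tendsto_0_trans[where b = "\<lambda>n. T (\<phi> n)"])
  then show "(f, g) \<in> closure_graph D T"
    unfolding closure_graph_def using f g \<psi> by blast
qed

lemma c_delta_le_abs:
  assumes "1/2 \<le> \<delta>" "\<bar>x\<bar> \<le> 1"
  shows "c_delta \<delta> x \<le> \<bar>x\<bar>"
proof (cases "x = 0")
  case True then show ?thesis using assms by (simp add: c_delta_def)
next
  case False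
  have "x\<^sup>2 / (1 + x\<^sup>2) \<le> x\<^sup>2" by (simp add: divide_le_eq mult_le_cancel_left1 add_pos_nonneg)
  then have "c_delta \<delta> x \<le> (x\<^sup>2) powr \<delta>" using assms by (simp add: c_delta_def powr_mono2)
  also have "(x\<^sup>2) powr \<delta> = \<bar>x\<bar> powr (2 * \<delta>)"
    using False by (simp add: powr_powr[symmetric] powr_realpow)
  also have "\<dots> \<le> \<bar>x\<bar> powr 1" using assms by (intro powr_mono') auto
  finally show ?thesis using False by simp
qed

definition cutoff_near_0 :: "nat \<Rightarrow> (real \<Rightarrow> complex) \<Rightarrow> real \<Rightarrow> complex" where
  "cutoff_near_0 N \<phi> x = complex_of_real (1 - log_cutoff N x) * \<phi> x"

lemma dx_cutoff_near_0:
  assumes "\<phi> differentiable (at x)"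
  shows "dx (cutoff_near_0 N \<phi>) x
    = complex_of_real (- log_cutoff_deriv N x) * \<phi> x + complex_of_real (1 - log_cutoff N x) * dx \<phi> x"
proof (rule dx_eqI)
  have "((\<lambda>x. 1 - log_cutoff N x) has_real_derivative - log_cutoff_deriv N x) (at x)"
    using log_cutoff_has_real_derivative by (auto intro!: derivative_eq_intros)
  from has_vector_derivative_mult[OF has_vector_derivative_of_real[OF this] has_vector_derivative_dx[OF assms]]
  show "(cutoff_near_0 N \<phi> has_vector_derivative
      complex_of_real (- log_cutoff_deriv N x) * \<phi> x + complex_of_real (1 - log_cutoff N x) * dx \<phi> x) (at x)"
    unfolding cutoff_near_0_def[abs_def] by (simp add: add.commute)
qed

lemma cutoff_near_0_Cc_inf:
  assumes \<phi>: "\<phi> \<in> Cc_inf UNIV" and N: "1 \<le> N"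
  shows "cutoff_near_0 N \<phi> \<in> Cc_inf (UNIV - {0})"
proof (rule Cc_infI[of _ "tsupp \<phi> \<inter> {x. (3/5) / 4^N \<le> \<bar>x\<bar>}"])
  have "real_smooth (\<lambda>x. 1 - log_cutoff N x)"
    by (intro real_smooth_diff real_smooth_const real_smooth_log_cutoff)
  then show "smooth (cutoff_near_0 N \<phi>)"
    using Cc_inf_smooth_upto[OF \<phi>]
    unfolding cutoff_near_0_def[abs_def] real_smooth_iff smooth_iff_smooth_upto
    by (auto intro: smooth_upto_mult)
  have "closed {x::real. (3/5) / 4^N \<le> \<bar>x\<bar>}" by (intro closed_Collect_le continuous_intros)
  then show "compact (tsupp \<phi> \<inter> {x. (3/5) / 4^N \<le> \<bar>x\<bar>})"
    using \<phi> by (intro compact_Int_closed) (auto simp: Cc_inf_def)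
  show "cutoff_near_0 N \<phi> x = 0" if "x \<notin> tsupp \<phi> \<inter> {x. (3/5) / 4^N \<le> \<bar>x\<bar>}" for x
    using that log_cutoff_eq_1[OF N] notin_tsupp_eq_0[of x \<phi>] by (force simp: cutoff_near_0_def)
  show "tsupp \<phi> \<inter> {x. (3/5) / 4^N \<le> \<bar>x\<bar>} \<subseteq> UNIV - {0}"
  proof
    fix x assume "x \<in> tsupp \<phi> \<inter> {x. (3/5) / 4^N \<le> \<bar>x\<bar>}"
    moreover have "0 < (3/5) / (4::real)^N" by simp
    ultimately have "0 < \<bar>x\<bar>" by (simp only: Int_iff mem_Collect_eq) linarith
    then show "x \<in> UNIV - {0}" by simp
  qed
qed

lemma L2dist2_cutoff_near_0_le:
  assumes \<phi>: "\<phi> \<in> Cc_inf UNIV" and N: "1 \<le> N" and B1: "\<And>x. cmod (\<phi> x) \<le> B1"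
  shows "L2dist2 (cutoff_near_0 N \<phi>) \<phi> \<le> B1\<^sup>2 * (2 / 2^N)"
proof -
  have "(cmod (cutoff_near_0 N \<phi> x - \<phi> x))\<^sup>2 \<le> B1\<^sup>2 * dyadic_indicator N x" for x
  proof -
    have "(cmod (cutoff_near_0 N \<phi> x - \<phi> x))\<^sup>2 = (log_cutoff N x)\<^sup>2 * (cmod (\<phi> x))\<^sup>2"
      by (simp add: cutoff_near_0_def algebra_simps norm_mult power_mult_distrib)
    moreover have "(log_cutoff N x)\<^sup>2 \<le> dyadic_indicator N x"
      using log_cutoff_eq_0[of N x] dyadic_indicator_eq_1[of x N] log_cutoff_nonneg[of N x]
        log_cutoff_le_1[of N x] dyadic_indicator_nonneg[of N x]
      by (cases "1 / 2^N \<le> \<bar>x\<bar>") (auto simp: power_le_one)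
    moreover have "(cmod (\<phi> x))\<^sup>2 \<le> B1\<^sup>2" using B1[of x] by (simp add: power_mono)
    ultimately show ?thesis
      by (metis dyadic_indicator_nonneg mult.commute mult_mono zero_le_power2)
  qed
  then have "L2dist2 (cutoff_near_0 N \<phi>) \<phi> \<le> (LINT x|lborel. B1\<^sup>2 * dyadic_indicator N x)"
    unfolding L2dist2_def
    using integrable_power2_norm_diff[OF L2_Cc_inf[OF cutoff_near_0_Cc_inf[OF \<phi> N]] L2_Cc_inf[OF \<phi>]]
      integrable_dyadic_indicator
    by (intro integral_mono) auto
  also have "\<dots> = B1\<^sup>2 * (2 / 2^N)" by (simp add: integral_dyadic_indicator)
  finally show ?thesis .
qed

lemma c_delta_times_log_cutoff_deriv_le:
  assumes "1/2 \<le> \<delta>" and M: "\<And>y. \<bar>plateau_deriv y\<bar> \<le> M"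
  shows "c_delta \<delta> x * (log_cutoff_deriv N x)\<^sup>2
    \<le> (M\<^sup>2 / (real N)\<^sup>2) * (\<Sum>j\<in>{N..<2*N}. 2^j * dyadic_indicator j x)"
proof (cases "\<bar>x\<bar> \<le> 1")
  case True
  then have "c_delta \<delta> x * (log_cutoff_deriv N x)\<^sup>2 \<le> \<bar>x\<bar> * (log_cutoff_deriv N x)\<^sup>2"
    using c_delta_le_abs[OF assms(1)] by (simp add: mult_right_mono)
  also have "\<dots> \<le> (M\<^sup>2 / (real N)\<^sup>2) * (\<Sum>j\<in>{N..<2*N}. 2^j * dyadic_indicator j x)"
    by (rule abs_times_log_cutoff_deriv_le[OF M])
  finally show ?thesis .
next
  case False
  have "(1::real) / 2^N \<le> 1" by simp
  then have "log_cutoff_deriv N x = 0" using False by (intro log_cutoff_deriv_eq_0) linarith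
  moreover have "0 \<le> (\<Sum>j\<in>{N..<2*N}. 2^j * dyadic_indicator j x)"
    by (intro sum_nonneg mult_nonneg_nonneg dyadic_indicator_nonneg) auto
  ultimately show ?thesis by simp
qed

lemma c_delta_times_log_cutoff_le:
  assumes "0 \<le> \<delta>"
  shows "c_delta \<delta> x * (log_cutoff N x)\<^sup>2 \<le> dyadic_indicator N x"
proof (cases "1/2^N \<le> \<bar>x\<bar>")
  case True then show ?thesis using log_cutoff_eq_0 dyadic_indicator_nonneg by simp
next
  case False
  have "(log_cutoff N x)\<^sup>2 \<le> 1" using log_cutoff_nonneg log_cutoff_le_1 by (simp add: power_le_one)
  then have "c_delta \<delta> x * (log_cutoff N x)\<^sup>2 \<le> 1 * 1"
    using c_delta_nonneg c_delta_le_1[OF assms] by (intro mult_mono) auto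
  then show ?thesis using False dyadic_indicator_eq_1 by simp
qed

lemma power2_norm_Xop_cutoff_near_0_le:
  assumes d: "1/2 \<le> \<delta>" and \<phi>: "\<phi> \<in> Cc_inf UNIV"
    and B1: "\<And>x. cmod (\<phi> x) \<le> B1" and B2: "\<And>x. cmod (dx \<phi> x) \<le> B2"
    and M: "\<And>y. \<bar>plateau_deriv y\<bar> \<le> M"
  shows "(cmod (Xop \<delta> (cutoff_near_0 N \<phi>) x - Xop \<delta> \<phi> x))\<^sup>2
    \<le> 2 * B1\<^sup>2 * (M\<^sup>2 / (real N)\<^sup>2) * (\<Sum>j\<in>{N..<2*N}. 2^j * dyadic_indicator j x)
      + 2 * B2\<^sup>2 * dyadic_indicator N x"
proof -
  define a where "a = log_cutoff_deriv N x"
  define b where "b = log_cutoff N x"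
  define c where "c = c_delta \<delta> x"
  have "dx \<phi> x - dx (cutoff_near_0 N \<phi>) x = complex_of_real a * \<phi> x + complex_of_real b * dx \<phi> x"
    unfolding a_def b_def dx_cutoff_near_0[OF Cc_inf_differentiable[OF \<phi>]] by (simp add: algebra_simps)
  then have "cmod (dx \<phi> x - dx (cutoff_near_0 N \<phi>) x) \<le> \<bar>a\<bar> * cmod (\<phi> x) + \<bar>b\<bar> * cmod (dx \<phi> x)"
    using norm_triangle_ineq[of "complex_of_real a * \<phi> x" "complex_of_real b * dx \<phi> x"]
    by (simp add: norm_mult)
  then have "(cmod (dx \<phi> x - dx (cutoff_near_0 N \<phi>) x))\<^sup>2 \<le> (\<bar>a\<bar> * cmod (\<phi> x) + \<bar>b\<bar> * cmod (dx \<phi> x))\<^sup>2"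
    by (simp add: power_mono)
  also have "\<dots> \<le> 2 * (a\<^sup>2 * (cmod (\<phi> x))\<^sup>2) + 2 * (b\<^sup>2 * (cmod (dx \<phi> x))\<^sup>2)"
    using power2_add_le[of "\<bar>a\<bar> * cmod (\<phi> x)" "\<bar>b\<bar> * cmod (dx \<phi> x)"]
    by (simp add: power_mult_distrib)
  also have "\<dots> \<le> 2 * (a\<^sup>2 * B1\<^sup>2) + 2 * (b\<^sup>2 * B2\<^sup>2)"
    using B1[of x] B2[of x] by (intro add_mono mult_left_mono power_mono) auto
  finally have "(cmod (dx \<phi> x - dx (cutoff_near_0 N \<phi>) x))\<^sup>2 \<le> 2 * (a\<^sup>2 * B1\<^sup>2) + 2 * (b\<^sup>2 * B2\<^sup>2)" .
  from mult_left_mono[OF this c_delta_nonneg[of \<delta> x]]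
  have "c * (cmod (dx \<phi> x - dx (cutoff_near_0 N \<phi>) x))\<^sup>2 \<le> 2 * B1\<^sup>2 * (c * a\<^sup>2) + 2 * B2\<^sup>2 * (c * b\<^sup>2)"
    by (simp add: c_def algebra_simps)
  also have "\<dots> \<le> 2 * B1\<^sup>2 * ((M\<^sup>2 / (real N)\<^sup>2) * (\<Sum>j\<in>{N..<2*N}. 2^j * dyadic_indicator j x))
                 + 2 * B2\<^sup>2 * dyadic_indicator N x"
    unfolding a_def b_def c_def using d
    by (intro add_mono mult_left_mono c_delta_times_log_cutoff_deriv_le[OF d M] c_delta_times_log_cutoff_le) auto
  finally show ?thesis
    unfolding c_def norm_Xop_diff_power2 by (simp add: mult.assoc)
qed

lemma L2dist2_Xop_cutoff_near_0_le:
  assumes d: "1/2 \<le> \<delta>" and \<phi>: "\<phi> \<in> Cc_inf UNIV" and N: "1 \<le> N"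
    and B1: "\<And>x. cmod (\<phi> x) \<le> B1" and B2: "\<And>x. cmod (dx \<phi> x) \<le> B2"
    and M: "\<And>y. \<bar>plateau_deriv y\<bar> \<le> M"
  shows "L2dist2 (Xop \<delta> (cutoff_near_0 N \<phi>)) (Xop \<delta> \<phi>) \<le> 4 * B1\<^sup>2 * M\<^sup>2 / real N + 4 * B2\<^sup>2 / 2^N"
proof -
  define H where "H x = 2 * B1\<^sup>2 * (M\<^sup>2 / (real N)\<^sup>2) * (\<Sum>j\<in>{N..<2*N}. 2^j * dyadic_indicator j x)
      + 2 * B2\<^sup>2 * dyadic_indicator N x" for x
  have H: "integrable lborel H"
    unfolding H_def[abs_def] using integrable_dyadic_indicator by auto
  have "integral\<^sup>L lborel (\<lambda>x. \<Sum>j\<in>{N..<2*N}. 2^j * dyadic_indicator j x) = 2 * real N"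
    using integrable_dyadic_indicator by (simp add: integral_dyadic_indicator)
  then have "integral\<^sup>L lborel H = 2 * B1\<^sup>2 * (M\<^sup>2 / (real N)\<^sup>2) * (2 * real N) + 2 * B2\<^sup>2 * (2 / 2^N)"
    unfolding H_def[abs_def] using integrable_dyadic_indicator by (simp add: integral_dyadic_indicator)
  also have "\<dots> = 4 * B1\<^sup>2 * M\<^sup>2 / real N + 4 * B2\<^sup>2 / 2^N"
    using N by (simp add: field_simps power2_eq_square)
  finally have IH: "integral\<^sup>L lborel H = \<dots>" .
  have "0 \<le> \<delta>" using d by simp
  have "L2dist2 (Xop \<delta> (cutoff_near_0 N \<phi>)) (Xop \<delta> \<phi>) \<le> integral\<^sup>L lborel H"
    unfolding L2dist2_def
  proof (rule integral_mono[OF integrable_power2_norm_diff H])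
    show "L2 (Xop \<delta> (cutoff_near_0 N \<phi>))" "L2 (Xop \<delta> \<phi>)"
      using L2_Xop[OF cutoff_near_0_Cc_inf[OF \<phi> N] \<open>0 \<le> \<delta>\<close>] L2_Xop[OF \<phi> \<open>0 \<le> \<delta>\<close>] by auto
  qed (unfold H_def, rule power2_norm_Xop_cutoff_near_0_le[OF d \<phi> B1 B2 M])
  then show ?thesis using IH by simp
qed

lemma Cc_inf_punctured_graph_dense:
  assumes d: "1/2 \<le> \<delta>" and \<phi>: "\<phi> \<in> Cc_inf UNIV" and e: "0 < e"
  shows "\<exists>\<psi>\<in>Cc_inf (UNIV - {0}). L2dist2 \<psi> \<phi> < e \<and> L2dist2 (Xop \<delta> \<psi>) (Xop \<delta> \<phi>) < e"
proof -
  obtain B1 where B1: "\<And>x. cmod (\<phi> x) \<le> B1" using Cc_inf_bounded(1)[OF \<phi>] by blast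
  obtain B2 where B2: "\<And>x. cmod (dx \<phi> x) \<le> B2" using Cc_inf_bounded(2)[OF \<phi>] by blast
  obtain M where M: "\<And>y. \<bar>plateau_deriv y\<bar> \<le> M" using plateau_deriv_bounded by blast
  define C where "C = 2 * B1\<^sup>2 + 4 * B1\<^sup>2 * M\<^sup>2 + 4 * B2\<^sup>2 + 1"
  have C: "0 < C" unfolding C_def by (simp add: add_nonneg_pos)
  obtain N :: nat where CN: "C / e < real N" using reals_Archimedean2 by blast
  moreover have "0 < C / e" using C e by simp
  ultimately have N: "0 < real N" by linarith
  then have C_N: "C / real N < e" using CN e by (simp add: field_simps)
  have N1: "1 \<le> N" using N by simp
  have inv2N: "a / 2^N \<le> a / real N" if "0 \<le> a" for a
    using N of_nat_less_two_power[of N] that by (intro divide_left_mono) auto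
  have "L2dist2 (cutoff_near_0 N \<phi>) \<phi> \<le> B1\<^sup>2 * (2 / 2^N)"
    by (rule L2dist2_cutoff_near_0_le[OF \<phi> N1 B1])
  also have "\<dots> \<le> (2 * B1\<^sup>2) / real N"
    using inv2N[of "2 * B1\<^sup>2"] by (simp add: mult.commute)
  also have "\<dots> \<le> C / real N"
    unfolding C_def using N by (intro divide_right_mono) auto
  finally have close: "L2dist2 (cutoff_near_0 N \<phi>) \<phi> < e" using C_N by simp
  have "L2dist2 (Xop \<delta> (cutoff_near_0 N \<phi>)) (Xop \<delta> \<phi>) \<le> 4 * B1\<^sup>2 * M\<^sup>2 / real N + 4 * B2\<^sup>2 / 2^N"
    by (rule L2dist2_Xop_cutoff_near_0_le[OF d \<phi> N1 B1 B2 M])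
  also have "\<dots> \<le> 4 * B1\<^sup>2 * M\<^sup>2 / real N + 4 * B2\<^sup>2 / real N"
    using inv2N[of "4 * B2\<^sup>2"] by simp
  also have "\<dots> \<le> C / real N"
    unfolding C_def add_divide_distrib[symmetric] using N by (intro divide_right_mono) auto
  finally have close_X: "L2dist2 (Xop \<delta> (cutoff_near_0 N \<phi>)) (Xop \<delta> \<phi>) < e" using C_N by simp
  show ?thesis using cutoff_near_0_Cc_inf[OF \<phi> N1] close close_X by blast
qed

lemma closure_graph_punctured_eq:
  assumes "1/2 \<le> \<delta>"
  shows "closure_graph (Cc_inf (UNIV - {0})) (Xop \<delta>) = closure_graph (Cc_inf UNIV) (Xop \<delta>)"
proof
  have L2: "L2 \<phi> \<and> L2 (Xop \<delta> \<phi>)" if "\<phi> \<in> Cc_inf U" for \<phi> U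
    using assms L2_Cc_inf[OF that] L2_Xop[OF that] by simp
  show "closure_graph (Cc_inf UNIV) (Xop \<delta>) \<subseteq> closure_graph (Cc_inf (UNIV - {0})) (Xop \<delta>)"
    by (rule closure_graph_subset_if_graph_dense[OF L2 L2 Cc_inf_punctured_graph_dense[OF assms]])
qed (rule closure_graph_punctured_subset)

theorem corollary7p5:
  fixes \<delta> :: real
  assumes "0 \<le> \<delta>" and "\<delta> < 1"
  shows "(\<delta> < 1/2 \<longrightarrow>
            closure_graph (Cc_inf (UNIV - {0})) (Xop \<delta>) \<subset> closure_graph (Cc_inf UNIV) (Xop \<delta>))
       \<and> (1/2 \<le> \<delta> \<longrightarrow>
            closure_graph (Cc_inf (UNIV - {0})) (Xop \<delta>) = closure_graph (Cc_inf UNIV) (Xop \<delta>))"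
  using closure_graph_punctured_psubset[OF assms(1)] closure_graph_punctured_eq by blast

end
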